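(* Let $F$ be a global function field with full constant field $\mathbb{F}_q$ and rational places $P_1,\dots,P_n$; fix $m\ge1$. Let $r\ge t\ge0$ and $j_1,\dots,j_m\ge0$ be integers. The set $\mathcal{U}(r,t;j_1,\dots,j_m)$ is nonempty if and only if (i) $mn-(j_1+2j_2+\cdots+mj_m)\le t\le(m+1)n-(2j_1+3j_2+\cdots+(m+1)j_m)$, and (ii) if $mn=t+j_1+2j_2+\cdots+mj_m$ and $r>t$, then there exists a positive divisor of degree $r-t$ whose support is disjoint from $\{P_1,\dots,P_n\}$.
   Context: For a positive divisor $D$: $\overline D=\sum_{i=1}^n\min(m+1,v_{P_i}(D))P_i$, $j_\ell(D)=|\{i:v_{P_i}(D)=m-\ell\}|$. $\mathcal{U}(r,t;j_1,\dots,j_m)$ is the set of positive divisors $D$ of $F$ with $\deg D=r$, $\deg\overline D=t$ and $j_\ell(D)=j_\ell$ for $1\le\ell\le m$. *)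

theory Defs
  imports Main
begin

(* Places of the function field are modelled by a type 'p together with a
   degree function pdeg :: 'p => nat (deg P >= 1).  A positive (effective)
   divisor is a finitely supported function 'p => nat (its valuations). *)

definition supp :: "('p \<Rightarrow> nat) \<Rightarrow> 'p set" where
  "supp D = {Q. D Q \<noteq> 0}"

definition pos_divisor :: "('p \<Rightarrow> nat) \<Rightarrow> bool" where
  "pos_divisor D \<longleftrightarrow> finite (supp D)"

definition div_deg :: "('p \<Rightarrow> nat) \<Rightarrow> ('p \<Rightarrow> nat) \<Rightarrow> nat" where
  "div_deg pdeg D = (\<Sum>Q\<in>supp D. D Q * pdeg Q)"

definition Dbar :: "nat \<Rightarrow> nat \<Rightarrow> (nat \<Rightarrow> 'p) \<Rightarrow> ('p \<Rightarrow> nat) \<Rightarrow> ('p \<Rightarrow> nat)" where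
  "Dbar m n P D = (\<lambda>Q. if Q \<in> P ` {1..n} then min (m + 1) (D Q) else 0)"

definition jl :: "nat \<Rightarrow> nat \<Rightarrow> (nat \<Rightarrow> 'p) \<Rightarrow> ('p \<Rightarrow> nat) \<Rightarrow> nat \<Rightarrow> nat" where
  "jl m n P D l = card {i \<in> {1..n}. D (P i) = m - l}"

definition U :: "('p \<Rightarrow> nat) \<Rightarrow> nat \<Rightarrow> nat \<Rightarrow> (nat \<Rightarrow> 'p) \<Rightarrow> nat \<Rightarrow> nat \<Rightarrow> (nat \<Rightarrow> nat)
    \<Rightarrow> ('p \<Rightarrow> nat) set" where
  "U pdeg m n P r t j = {D. pos_divisor D \<and> div_deg pdeg D = r \<and>
       div_deg pdeg (Dbar m n P D) = t \<and> (\<forall>l\<in>{1..m}. jl m n P D l = j l)}"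

end

theory Submission
  imports Defs "HOL-Library.Multiset"
begin

(* Only the multiset V of the valuations of D at P_1, ..., P_n and the part E of D away
   from the P_i matter: deg D = sum V + deg E, deg Dbar is the sum of min(m+1, v) over V,
   and j_l is the multiplicity of m - l in V.  Place by place,
   min(m+1, v) + max(m - v, 0) = m + [v > m], so summing gives t + sum_l l j_l = m n + K,
   where K counts the values above m; and K <= n - sum_l j_l, since the values below m are
   exactly those counted by the j_l.  Thus (i) says that K = t + sum_l l j_l - m n lies
   between 0 and n - sum_l j_l, and every such K is realised by some V.  Equality in the
   lower bound means K = 0: then all valuations are at most m, deg D - t = deg E, and the
   surplus r - t must come from a divisor avoiding the P_i, which is (ii).  When K > 0 the
   surplus can instead be put on a place whose valuation already exceeds m. *)

lemma sum_level_indicator: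
  fixes m x :: nat
  shows "(\<Sum>l=1..m. if m - l = x then f l else 0) = (if x < m then f (m - x) else (0::'a::comm_monoid_add))"
proof (cases "x < m")
  case True
  then have "(\<Sum>l=1..m. if m - l = x then f l else 0) = (\<Sum>l\<in>{1..m}. if l = m - x then f l else 0)"
    by (intro sum.cong refl) (auto simp: eq_diff_iff)
  also have "\<dots> = f (m - x)"
    using True by (subst sum.delta) auto
  finally show ?thesis
    using True by simp
next
  case False
  then show ?thesis
    by (simp, intro sum.neutral) auto
qed

lemma count_levels_le_size:
  fixes V :: "nat multiset"
  shows "(\<Sum>l=1..m. count V (m - l)) + size (filter_mset (\<lambda>x. m < x) V) \<le> size V"
proof (induction V)
  case (add x V)
  have "(\<Sum>l=1..m. count (add_mset x V) (m - l))
      = (\<Sum>l=1..m. count V (m - l)) + (\<Sum>l=1..m. if m - l = x then 1 else 0)"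
    unfolding sum.distrib[symmetric] by (intro sum.cong) auto
  also have "\<dots> = (\<Sum>l=1..m. count V (m - l)) + (if x < m then 1 else 0)"
    unfolding sum_level_indicator ..
  moreover have "size (filter_mset (\<lambda>y. m < y) (add_mset x V))
      = size (filter_mset (\<lambda>y. m < y) V) + (if m < x then 1 else 0)"
    by simp
  ultimately show ?case
    using add.IH by (auto split: if_splits)
qed simp

lemma weighted_levels_plus_sum_min:
  fixes V :: "nat multiset"
  shows "(\<Sum>l=1..m. l * count V (m - l)) + (\<Sum>x\<in>#V. min (m + 1) x)
     = m * size V + size (filter_mset (\<lambda>x. m < x) V)"
proof (induction V)
  case (add x V)
  have "(\<Sum>l=1..m. l * count (add_mset x V) (m - l))
      = (\<Sum>l=1..m. l * count V (m - l)) + (\<Sum>l=1..m. if m - l = x then l else 0)"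
    unfolding sum.distrib[symmetric] by (intro sum.cong) auto
  also have "\<dots> = (\<Sum>l=1..m. l * count V (m - l)) + (if x < m then m - x else 0)"
    unfolding sum_level_indicator ..
  moreover have "size (filter_mset (\<lambda>y. m < y) (add_mset x V))
      = size (filter_mset (\<lambda>y. m < y) V) + (if m < x then 1 else 0)"
    by simp
  ultimately show ?case
    using add.IH by (auto split: if_splits)
qed simp

lemma sum_mset_eq_sum_min_plus_excess:
  fixes V :: "nat multiset"
  shows "sum_mset V = (\<Sum>x\<in>#V. min c x) + (\<Sum>x\<in>#V. x - c)"
proof (induction V)
  case (add x V)
  have "x = min c x + (x - c)" by simp
  with add.IH show ?case by simp
qed simp

definition level_mset :: "nat \<Rightarrow> (nat \<Rightarrow> nat) \<Rightarrow> nat multiset" where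
  "level_mset m j = (\<Sum>l\<in>{1..m}. replicate_mset (j l) (m - l))"

lemma count_level_mset:
  assumes "l \<in> {1..m}"
  shows "count (level_mset m j) (m - l) = j l"
proof -
  have "count (level_mset m j) (m - l) = (\<Sum>l'\<in>{1..m}. if l' = l then j l' else 0)"
    unfolding level_mset_def count_sum using assms by (intro sum.cong refl) auto
  also have "\<dots> = j l"
    using assms by simp
  finally show ?thesis .
qed

lemma level_mset_below: "x \<in># level_mset m j \<Longrightarrow> x < m"
  by (auto simp: level_mset_def set_mset_sum split: if_splits)

lemma size_level_mset: "size (level_mset m j) = (\<Sum>l=1..m. j l)"
  by (simp add: level_mset_def)

lemma filter_replicate_mset:
  "filter_mset P (replicate_mset k x) = (if P x then replicate_mset k x else {#})"
  by (induction k) auto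

lemma multiset_with_levels_exists:
  fixes m n K e :: nat
  assumes "(\<Sum>l=1..m. j l) + K \<le> n"
  obtains V where "size V = n" "\<forall>l\<in>{1..m}. count V (m - l) = j l"
    "size (filter_mset (\<lambda>x. m < x) V) = K" "(\<Sum>x\<in>#V. x - (m + 1)) = (if K = 0 then 0 else e)"
proof
  define high where
    "high = (if K = 0 then {#} else add_mset (m + 1 + e) (replicate_mset (K - 1) (m + 1)))"
  define V where
    "V = level_mset m j + replicate_mset (n - (\<Sum>l=1..m. j l) - K) m + high"
  have low_le: "\<And>x. x \<in># level_mset m j \<Longrightarrow> x \<le> m"
    using level_mset_below less_imp_le by blast
  show "size V = n"
    using assms by (simp add: V_def high_def size_level_mset)
  show "\<forall>l\<in>{1..m}. count V (m - l) = j l"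
    by (auto simp: V_def high_def count_level_mset)
  show "size (filter_mset (\<lambda>x. m < x) V) = K"
    by (simp add: V_def high_def low_le not_less filter_replicate_mset)
  show "(\<Sum>x\<in>#V. x - (m + 1)) = (if K = 0 then 0 else e)"
    by (auto simp: V_def high_def dest: low_le)
qed

lemma value_multiset_necessary:
  fixes V :: "nat multiset"
  assumes counts: "\<forall>l\<in>{1..m}. count V (m - l) = j l"
  shows "int m * int (size V) - (\<Sum>l=1..m. int l * int (j l)) \<le> int (\<Sum>x\<in>#V. min (m + 1) x)"
    and "int (\<Sum>x\<in>#V. min (m + 1) x)
      \<le> (int m + 1) * int (size V) - (\<Sum>l=1..m. (int l + 1) * int (j l))"
    and "int m * int (size V) = int (\<Sum>x\<in>#V. min (m + 1) x) + (\<Sum>l=1..m. int l * int (j l))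
      \<Longrightarrow> sum_mset V = (\<Sum>x\<in>#V. min (m + 1) x)"
proof -
  define K where "K = size (filter_mset (\<lambda>x. m < x) V)"
  have "(\<Sum>l=1..m. l * count V (m - l)) = (\<Sum>l=1..m. l * j l)"
    and "(\<Sum>l=1..m. count V (m - l)) = (\<Sum>l=1..m. j l)"
    using counts by simp_all
  then have nat_identity: "(\<Sum>l=1..m. l * j l) + (\<Sum>x\<in>#V. min (m + 1) x) = m * size V + K"
    and nat_room: "(\<Sum>l=1..m. j l) + K \<le> size V"
    using weighted_levels_plus_sum_min[of V m] count_levels_le_size[of V m] by (simp_all add: K_def)
  have identity:
    "(\<Sum>l=1..m. int l * int (j l)) + int (\<Sum>x\<in>#V. min (m + 1) x) = int m * int (size V) + int K"
    using arg_cong[OF nat_identity, of int] unfolding of_nat_add of_nat_mult of_nat_sum .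
  have room: "(\<Sum>l=1..m. int (j l)) + int K \<le> int (size V)"
    using nat_room[folded of_nat_le_iff[where 'a=int]] unfolding of_nat_add of_nat_sum .
  have "(\<Sum>l=1..m. (int l + 1) * int (j l)) = (\<Sum>l=1..m. int l * int (j l)) + (\<Sum>l=1..m. int (j l))"
    by (simp add: distrib_right sum.distrib)
  moreover have "(int m + 1) * int (size V) = int m * int (size V) + int (size V)"
    by (simp add: distrib_right)
  ultimately show "int (\<Sum>x\<in>#V. min (m + 1) x)
      \<le> (int m + 1) * int (size V) - (\<Sum>l=1..m. (int l + 1) * int (j l))"
    using identity room by linarith
  show "int m * int (size V) - (\<Sum>l=1..m. int l * int (j l)) \<le> int (\<Sum>x\<in>#V. min (m + 1) x)"
    using identity by linarith
  assume "int m * int (size V) = int (\<Sum>x\<in>#V. min (m + 1) x) + (\<Sum>l=1..m. int l * int (j l))"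
  then have "K = 0"
    using identity by linarith
  then have "(\<Sum>x\<in>#V. x - (m + 1)) = 0"
    by (auto simp: K_def not_less)
  then show "sum_mset V = (\<Sum>x\<in>#V. min (m + 1) x)"
    using sum_mset_eq_sum_min_plus_excess[of V "m + 1"] by simp
qed

lemma value_multiset_sufficient:
  fixes m n t e :: nat
  assumes lower: "int m * int n - (\<Sum>l=1..m. int l * int (j l)) \<le> int t"
    and upper: "int t \<le> (int m + 1) * int n - (\<Sum>l=1..m. (int l + 1) * int (j l))"
    and tight: "int m * int n = int t + (\<Sum>l=1..m. int l * int (j l)) \<Longrightarrow> e = 0"
  obtains V where "size V = n" "\<forall>l\<in>{1..m}. count V (m - l) = j l"
    "(\<Sum>x\<in>#V. min (m + 1) x) = t" "sum_mset V = t + e"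
proof -
  define K where "K = nat (int t + (\<Sum>l=1..m. int l * int (j l)) - int m * int n)"
  have "int ((\<Sum>l=1..m. l * j l) + t) = int (m * n + K)"
    and "int ((\<Sum>l=1..m. j l) + K) \<le> int n"
    using lower upper by (simp_all add: K_def algebra_simps sum.distrib)
  then have identity: "(\<Sum>l=1..m. l * j l) + t = m * n + K" and room: "(\<Sum>l=1..m. j l) + K \<le> n"
    by (simp_all only: of_nat_eq_iff of_nat_le_iff)
  obtain V where size: "size V = n" and counts: "\<forall>l\<in>{1..m}. count V (m - l) = j l"
    and K: "size (filter_mset (\<lambda>x. m < x) V) = K"
    and excess: "(\<Sum>x\<in>#V. x - (m + 1)) = (if K = 0 then 0 else e)"
    using multiset_with_levels_exists[of j m K n e] room by auto
  have "(\<Sum>l=1..m. l * count V (m - l)) = (\<Sum>l=1..m. l * j l)"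
    using counts by simp
  then have min_t: "(\<Sum>x\<in>#V. min (m + 1) x) = t"
    using weighted_levels_plus_sum_min[of V m] identity size K by simp
  have "K = 0 \<Longrightarrow> e = 0"
    using tight arg_cong[OF identity, of int] by simp
  then have "sum_mset V = t + e"
    using sum_mset_eq_sum_min_plus_excess[of V "m + 1"] min_t excess by (cases "K = 0") simp_all
  then show thesis
    using that size counts min_t by blast
qed

lemma value_multiset_exists_iff:
  fixes j :: "nat \<Rightarrow> nat" and m n t d r :: nat
  shows "(\<exists>V. size V = n \<and> (\<Sum>x\<in>#V. min (m + 1) x) = t \<and> sum_mset V + d = r \<and>
            (\<forall>l\<in>{1..m}. count V (m - l) = j l))
    \<longleftrightarrow> (int m * int n - (\<Sum>l=1..m. int l * int (j l)) \<le> int t \<and>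
          int t \<le> (int m + 1) * int n - (\<Sum>l=1..m. (int l + 1) * int (j l))) \<and>
        t + d \<le> r \<and> (int m * int n = int t + (\<Sum>l=1..m. int l * int (j l)) \<longrightarrow> t + d = r)"
proof
  assume "\<exists>V. size V = n \<and> (\<Sum>x\<in>#V. min (m + 1) x) = t \<and> sum_mset V + d = r \<and>
            (\<forall>l\<in>{1..m}. count V (m - l) = j l)"
  then obtain V where "size V = n" "(\<Sum>x\<in>#V. min (m + 1) x) = t" "sum_mset V + d = r"
    "\<forall>l\<in>{1..m}. count V (m - l) = j l"
    by blast
  moreover have "(\<Sum>x\<in>#V. min (m + 1) x) \<le> sum_mset V"
    using sum_mset_eq_sum_min_plus_excess[of V "m + 1"] by simp
  ultimately show "(int m * int n - (\<Sum>l=1..m. int l * int (j l)) \<le> int t \<and>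
          int t \<le> (int m + 1) * int n - (\<Sum>l=1..m. (int l + 1) * int (j l))) \<and>
        t + d \<le> r \<and> (int m * int n = int t + (\<Sum>l=1..m. int l * int (j l)) \<longrightarrow> t + d = r)"
    using value_multiset_necessary[of m V j] by auto
next
  assume conditions: "(int m * int n - (\<Sum>l=1..m. int l * int (j l)) \<le> int t \<and>
          int t \<le> (int m + 1) * int n - (\<Sum>l=1..m. (int l + 1) * int (j l))) \<and>
        t + d \<le> r \<and> (int m * int n = int t + (\<Sum>l=1..m. int l * int (j l)) \<longrightarrow> t + d = r)"
  then obtain V where "size V = n" "\<forall>l\<in>{1..m}. count V (m - l) = j l"
    "(\<Sum>x\<in>#V. min (m + 1) x) = t" "sum_mset V = t + (r - (t + d))"
    using value_multiset_sufficient[of m n j t "r - (t + d)"] by auto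
  then show "\<exists>V. size V = n \<and> (\<Sum>x\<in>#V. min (m + 1) x) = t \<and> sum_mset V + d = r \<and>
            (\<forall>l\<in>{1..m}. count V (m - l) = j l)"
    using conditions by auto
qed

definition rational_values :: "nat \<Rightarrow> (nat \<Rightarrow> 'p) \<Rightarrow> ('p \<Rightarrow> nat) \<Rightarrow> nat multiset" where
  "rational_values n P D = {# D (P i). i \<in># mset_set {1..n} #}"

definition away_from :: "'p set \<Rightarrow> ('p \<Rightarrow> nat) \<Rightarrow> 'p \<Rightarrow> nat" where
  "away_from B D = (\<lambda>Q. if Q \<in> B then 0 else D Q)"

lemma sum_rational_values: "(\<Sum>x\<in>#rational_values n P D. g x) = (\<Sum>i=1..n. g (D (P i)))"
  by (simp add: rational_values_def sum_unfold_sum_mset image_mset.compositionality comp_def)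

lemma supp_zero [simp]: "supp (\<lambda>_. 0) = {}"
  by (simp add: supp_def)

lemma pos_divisor_zero [simp]: "pos_divisor (\<lambda>_. 0)"
  by (simp add: pos_divisor_def)

lemma div_deg_zero [simp]: "div_deg pdeg (\<lambda>_. 0) = 0"
  by (simp add: div_deg_def)

lemma div_deg_eq_sum_superset:
  assumes "finite S" "supp D \<subseteq> S"
  shows "div_deg pdeg D = (\<Sum>Q\<in>S. D Q * pdeg Q)"
  unfolding div_deg_def using assms by (intro sum.mono_neutral_left) (auto simp: supp_def)

lemma supp_away_from: "supp (away_from B D) = supp D - B"
  by (auto simp: supp_def away_from_def)

lemma pos_divisor_away_from: "pos_divisor D \<Longrightarrow> pos_divisor (away_from B D)"
  by (simp add: pos_divisor_def supp_away_from)

lemma div_deg_split: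
  assumes "pos_divisor D" "finite B"
  shows "div_deg pdeg D = (\<Sum>Q\<in>B. D Q * pdeg Q) + div_deg pdeg (away_from B D)"
proof -
  let ?S = "supp D \<union> B"
  have finite: "finite ?S"
    using assms by (simp add: pos_divisor_def)
  have "div_deg pdeg D = (\<Sum>Q\<in>?S. D Q * pdeg Q)"
    using finite by (intro div_deg_eq_sum_superset) auto
  also have "\<dots> = (\<Sum>Q\<in>?S - B. D Q * pdeg Q) + (\<Sum>Q\<in>B. D Q * pdeg Q)"
    using finite by (intro sum.subset_diff) auto
  also have "(\<Sum>Q\<in>?S - B. D Q * pdeg Q) = (\<Sum>Q\<in>?S - B. away_from B D Q * pdeg Q)"
    by (intro sum.cong) (auto simp: away_from_def)
  also have "\<dots> = div_deg pdeg (away_from B D)"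
    using finite by (intro div_deg_eq_sum_superset[symmetric]) (auto simp: supp_away_from)
  finally show ?thesis
    by simp
qed

lemma count_image_mset_mset_set:
  "finite A \<Longrightarrow> count (image_mset f (mset_set A)) y = card {x \<in> A. f x = y}"
  by (simp add: count_image_mset Int_def conj_commute)

lemma jl_eq_count_rational_values: "jl m n P D l = count (rational_values n P D) (m - l)"
  by (simp add: jl_def rational_values_def count_image_mset_mset_set)

lemma size_rational_values [simp]: "size (rational_values n P D) = n"
  by (simp add: rational_values_def)

lemma mset_realized_on_interval:
  assumes "size V = n"
  obtains v where "{# v i. i \<in># mset_set {1..n} #} = V"
proof -
  obtain xs where xs: "mset xs = V"
    using ex_mset by blast
  have "mset_set {1..n} = mset [1..<Suc n]"
    by (metis atLeastLessThanSuc_atLeastAtMost distinct_upt mset_set_set set_upt)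
  moreover have "map (\<lambda>i. xs ! (i - 1)) [1..<Suc n] = xs"
    using assms xs by (intro nth_equalityI) (auto simp del: upt_Suc)
  ultimately have "{# xs ! (i - 1). i \<in># mset_set {1..n} #} = V"
    using xs by (metis mset_map)
  then show thesis
    using that by blast
qed

lemma ex_divisor_avoiding_iff:
  fixes t r :: nat
  assumes "t \<le> r"
  shows "(\<exists>E. pos_divisor E \<and> supp E \<inter> B = {} \<and> t + div_deg pdeg E \<le> r \<and>
            (tight \<longrightarrow> t + div_deg pdeg E = r))
    \<longleftrightarrow> (tight \<and> r > t \<longrightarrow>
          (\<exists>E. pos_divisor E \<and> div_deg pdeg E = r - t \<and> supp E \<inter> B = {}))"
proof
  assume "\<exists>E. pos_divisor E \<and> supp E \<inter> B = {} \<and> t + div_deg pdeg E \<le> r \<and>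
            (tight \<longrightarrow> t + div_deg pdeg E = r)"
  then show "tight \<and> r > t \<longrightarrow>
      (\<exists>E. pos_divisor E \<and> div_deg pdeg E = r - t \<and> supp E \<inter> B = {})"
    by fastforce
next
  assume avoiding: "tight \<and> r > t \<longrightarrow>
      (\<exists>E. pos_divisor E \<and> div_deg pdeg E = r - t \<and> supp E \<inter> B = {})"
  show "\<exists>E. pos_divisor E \<and> supp E \<inter> B = {} \<and> t + div_deg pdeg E \<le> r \<and>
            (tight \<longrightarrow> t + div_deg pdeg E = r)"
  proof (cases "tight \<and> r > t")
    case True
    then show ?thesis
      using avoiding by fastforce
  next
    case False
    then show ?thesis
      using assms by (intro exI[of _ "\<lambda>_. 0"]) auto
  qed
qed

locale rational_places =
  fixes pdeg :: "'p \<Rightarrow> nat" and P :: "nat \<Rightarrow> 'p" and n :: nat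
  assumes P_inj: "inj_on P {1..n}"
    and P_rat: "\<And>i. i \<in> {1..n} \<Longrightarrow> pdeg (P i) = 1"
begin

lemma sum_rational_places: "(\<Sum>Q\<in>P ` {1..n}. f Q * pdeg Q) = (\<Sum>i=1..n. f (P i))"
  using P_inj P_rat by (simp add: sum.reindex)

lemma div_deg_eq_rational_values:
  "pos_divisor D \<Longrightarrow>
    div_deg pdeg D = sum_mset (rational_values n P D) + div_deg pdeg (away_from (P ` {1..n}) D)"
  using div_deg_split[of D "P ` {1..n}" pdeg] sum_rational_places[of D]
    sum_rational_values[of "\<lambda>x. x" n P D]
  by simp

lemma div_deg_Dbar: "div_deg pdeg (Dbar m n P D) = (\<Sum>x\<in>#rational_values n P D. min (m + 1) x)"
proof -
  have "div_deg pdeg (Dbar m n P D) = (\<Sum>Q\<in>P ` {1..n}. Dbar m n P D Q * pdeg Q)"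
    by (intro div_deg_eq_sum_superset) (auto simp: supp_def Dbar_def)
  also have "\<dots> = (\<Sum>i=1..n. min (m + 1) (D (P i)))"
    unfolding sum_rational_places by (intro sum.cong) (auto simp: Dbar_def)
  finally show ?thesis
    by (simp add: sum_rational_values)
qed

lemma divisor_with_rational_values_exists:
  assumes "size V = n" "pos_divisor E" "supp E \<inter> P ` {1..n} = {}"
  obtains D where "pos_divisor D" "rational_values n P D = V" "away_from (P ` {1..n}) D = E"
proof -
  obtain v where v: "{# v i. i \<in># mset_set {1..n} #} = V"
    using mset_realized_on_interval assms(1) by blast
  define D where "D Q = (if Q \<in> P ` {1..n} then v (the_inv_into {1..n} P Q) else E Q)" for Q
  have "supp D \<subseteq> P ` {1..n} \<union> supp E"
    by (auto simp: supp_def D_def)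
  then have "pos_divisor D"
    using assms(2) by (auto simp: pos_divisor_def intro: finite_subset)
  moreover have "{# D (P i). i \<in># mset_set {1..n} #} = {# v i. i \<in># mset_set {1..n} #}"
    using P_inj by (intro image_mset_cong) (simp add: D_def the_inv_into_f_f)
  moreover have "away_from (P ` {1..n}) D = E"
    using assms(3) by (auto simp: away_from_def D_def supp_def fun_eq_iff)
  ultimately show thesis
    using that v by (simp add: rational_values_def)
qed

lemma U_nonempty_iff_rational_values:
  "U pdeg m n P r t j \<noteq> {} \<longleftrightarrow>
    (\<exists>V E. pos_divisor E \<and> supp E \<inter> P ` {1..n} = {} \<and> size V = n \<and>
       sum_mset V + div_deg pdeg E = r \<and> (\<Sum>x\<in>#V. min (m + 1) x) = t \<and>
       (\<forall>l\<in>{1..m}. count V (m - l) = j l))"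
    (is "_ \<longleftrightarrow> (\<exists>V E. ?valuations V E)")
proof
  assume "U pdeg m n P r t j \<noteq> {}"
  then obtain D where "D \<in> U pdeg m n P r t j"
    by blast
  then have D: "pos_divisor D" "div_deg pdeg D = r" "div_deg pdeg (Dbar m n P D) = t"
    "\<forall>l\<in>{1..m}. jl m n P D l = j l"
    by (simp_all add: U_def)
  have "?valuations (rational_values n P D) (away_from (P ` {1..n}) D)"
    using D div_deg_eq_rational_values[OF D(1)] div_deg_Dbar[of m D]
    by (auto simp: pos_divisor_away_from supp_away_from jl_eq_count_rational_values)
  then show "\<exists>V E. ?valuations V E"
    by blast
next
  assume "\<exists>V E. ?valuations V E"
  then obtain V E where valuations: "?valuations V E"
    by blast
  then obtain D where D: "pos_divisor D" "rational_values n P D = V" "away_from (P ` {1..n}) D = E"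
    using divisor_with_rational_values_exists by blast
  then have "D \<in> U pdeg m n P r t j"
    using valuations div_deg_eq_rational_values[OF D(1)] div_deg_Dbar[of m D]
    by (simp add: U_def jl_eq_count_rational_values)
  then show "U pdeg m n P r t j \<noteq> {}"
    by blast
qed

end

theorem lemma3p3:
  fixes pdeg :: "'p \<Rightarrow> nat" and P :: "nat \<Rightarrow> 'p"
    and m n r t :: nat and j :: "nat \<Rightarrow> nat"
  assumes pdeg_pos: "\<And>Q. pdeg Q \<ge> 1"
    and P_inj: "inj_on P {1..n}"
    and P_rat: "\<And>i. i \<in> {1..n} \<Longrightarrow> pdeg (P i) = 1"
    and m_pos: "m \<ge> 1"
    and rt: "t \<le> r"
  shows "U pdeg m n P r t j \<noteq> {} \<longleftrightarrow>
    ((int m * int n - (\<Sum>l=1..m. int l * int (j l)) \<le> int t \<and>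
      int t \<le> (int m + 1) * int n - (\<Sum>l=1..m. (int l + 1) * int (j l))) \<and>
     ((int m * int n = int t + (\<Sum>l=1..m. int l * int (j l)) \<and> r > t) \<longrightarrow>
        (\<exists>D. pos_divisor D \<and> div_deg pdeg D = r - t \<and>
             supp D \<inter> P ` {1..n} = {})))"
proof -
  interpret rational_places pdeg P n
    using P_inj P_rat by unfold_locales
  let ?bounds = "int m * int n - (\<Sum>l=1..m. int l * int (j l)) \<le> int t \<and>
      int t \<le> (int m + 1) * int n - (\<Sum>l=1..m. (int l + 1) * int (j l))"
  let ?tight = "int m * int n = int t + (\<Sum>l=1..m. int l * int (j l))"
  have "U pdeg m n P r t j \<noteq> {} \<longleftrightarrow> (\<exists>E. pos_divisor E \<and> supp E \<inter> P ` {1..n} = {} \<and>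
      (\<exists>V. size V = n \<and> (\<Sum>x\<in>#V. min (m + 1) x) = t \<and> sum_mset V + div_deg pdeg E = r \<and>
        (\<forall>l\<in>{1..m}. count V (m - l) = j l)))"
    unfolding U_nonempty_iff_rational_values by blast
  also have "\<dots> \<longleftrightarrow> ?bounds \<and> (\<exists>E. pos_divisor E \<and> supp E \<inter> P ` {1..n} = {} \<and>
      t + div_deg pdeg E \<le> r \<and> (?tight \<longrightarrow> t + div_deg pdeg E = r))"
    unfolding value_multiset_exists_iff by blast
  finally show ?thesis
    unfolding ex_divisor_avoiding_iff[OF rt] .
qed

end
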